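(* Suppose $\vec b,C$ are Hölder continuous and uniformly bounded, $C$ is uniformly strictly elliptic, and $F$ satisfies the condition in the context. Suppose $\rho_r=p_{\epsilon_r^2}$ and $\rho_\gamma=p_{\epsilon_\gamma^2}$ are centered Gaussian densities on $\mathbb R^d$ with covariances $\epsilon_r^2I$ and $\epsilon_\gamma^2I$. Let $\lambda=\sup_x\sup_{\|y\|=1}y^TC(x)y$. If $\epsilon_r^2+\frac{2\lambda}{\theta}<\epsilon_\gamma^2$, then there is $C<\infty$ such that for all $x\in\mathbb R^d$ and $\eta\in\mathcal M_F(\mathbb R^d)$, $$\Big|\theta\int(\rho_r*\eta(y)-\rho_r*\eta(x))q_\theta(x,dy)\Big|\le C\rho_\gamma*\eta(x)\quad\text{and}\quad\theta\int(\rho_r*\eta(y)-\rho_r*\eta(x))^2q_\theta(x,dy)\le C(\rho_\gamma*\eta(x))^2.$$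
   Context: $q_\theta(x,dy)$ is the Gaussian distribution with mean $x+\vec b(x)/\theta$ and covariance $C(x)/\theta$; $\rho*\eta(x)=\int\rho(x-y)\eta(dy)$ for finite measures $\eta$. Condition on $F:\mathbb R^d\times[0,\infty)\to\mathbb R$: locally Lipschitz in the second argument, bounded above, and $\sup_x\sup_{k\le m}|F(x,k)|<\infty$ for each $m$. *)

theory Defs
  imports "HOL-Analysis.Analysis"
begin

definition gauss_density :: "real^'n \<Rightarrow> real^'n^'n \<Rightarrow> real^'n \<Rightarrow> real" where
  "gauss_density m S y =
     (2 * pi) powr (- real CARD('n) / 2) / sqrt (det S)
     * exp (- (1/2) * ((y - m) \<bullet> (matrix_inv S *v (y - m))))"

definition p_gauss :: "real \<Rightarrow> real^'n \<Rightarrow> real" where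
  "p_gauss s z = (2 * pi * s) powr (- real CARD('n) / 2) * exp (- ((norm z)^2) / (2 * s))"

definition gauss_measure :: "real^'n \<Rightarrow> real^'n^'n \<Rightarrow> (real^'n) measure" where
  "gauss_measure m S = density lborel (\<lambda>y. ennreal (gauss_density m S y))"

definition q_kernel :: "(real^'n \<Rightarrow> real^'n) \<Rightarrow> (real^'n \<Rightarrow> real^'n^'n) \<Rightarrow> real
    \<Rightarrow> real^'n \<Rightarrow> (real^'n) measure" where
  "q_kernel b C \<theta> x = gauss_measure (x + (1/\<theta>) *\<^sub>R b x) ((1/\<theta>) *\<^sub>R C x)"

definition conv_meas :: "(real^'n \<Rightarrow> real) \<Rightarrow> (real^'n) measure \<Rightarrow> real^'n \<Rightarrow> real" where
  "conv_meas \<rho> \<eta> x = (\<integral>y. \<rho> (x - y) \<partial>\<eta>)"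

definition holder_continuous :: "('a::metric_space \<Rightarrow> 'b::real_normed_vector) \<Rightarrow> bool" where
  "holder_continuous f \<longleftrightarrow> (\<exists>\<alpha> K. 0 < \<alpha> \<and> \<alpha> \<le> 1 \<and>
      (\<forall>x y. norm (f x - f y) \<le> K * dist x y powr \<alpha>))"

definition F_condition :: "(real^'n \<Rightarrow> real \<Rightarrow> real) \<Rightarrow> bool" where
  "F_condition F \<longleftrightarrow>
     (\<forall>m. \<exists>L. \<forall>x k k'. 0 \<le> k \<and> k \<le> m \<and> 0 \<le> k' \<and> k' \<le> m \<longrightarrow>
          \<bar>F x k - F x k'\<bar> \<le> L * \<bar>k - k'\<bar>)
     \<and> (\<exists>U. \<forall>x k. 0 \<le> k \<longrightarrow> F x k \<le> U)
     \<and> (\<forall>m. \<exists>B. \<forall>x k. 0 \<le> k \<and> k \<le> m \<longrightarrow> \<bar>F x k\<bar> \<le> B)"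

end

theory Submission
  imports Defs "HOL-Probability.Probability"
begin

(* The Gaussian comparison, obtained by completing the square,
     p_s(y - z) <= (t/s)^(d/2) exp(|y - x|^2 / (2 (t - s))) p_t(x - z)    (s = eps_r^2 < t = eps_g^2)
   integrates to  rho_r * eta(y) <= (t/s)^(d/2) exp(|y - x|^2 / (2 (t - s))) rho_g * eta(x).
   Bounding |f(y) - f(x)| by f(y) + f(x), both increments are therefore controlled by rho_g * eta(x)
   (resp. its square) times the moment of exp(|y - x|^2 / (t - s)) under q_theta(x, .).
   The density of q_theta(x, .) is at most a multiple of exp(- theta |y - m|^2 / (2 lambda)): its
   covariance C(x)/theta is bounded by lambda/theta, and its determinant is bounded below since the
   uniformly elliptic matrices of bounded norm form a compact set on which det is positive.
   As the mean m lies within |b(x)|/theta of x, the moment is finite uniformly in x as soon as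
   1/(t - s) < theta/(2 lambda), which is the hypothesis eps_r^2 + 2 lambda/theta < eps_g^2. *)

section \<open>Quadratic forms\<close>

lemma norm_matrix_vector_mult_le:
  fixes A :: "real^'n^'m"
  shows "norm (A *v x) \<le> real CARD('m) * real CARD('n) * norm A * norm x"
proof -
  have "norm (A *v x) \<le> onorm ((*v) A) * norm x"
    by (rule onorm[OF matrix_vector_mul_bounded_linear])
  also have "onorm ((*v) A) \<le> real CARD('m) * real CARD('n) * norm A"
    by (rule onorm_le_matrix_component)
      (rule order_trans[OF component_le_norm_cart Finite_Cartesian_Product.norm_nth_le])
  finally show ?thesis
    by (simp add: mult_right_mono)
qed

lemma quadratic_form_le_SUP_unit_sphere:
  fixes M :: "'a \<Rightarrow> real^'n^'n"
  assumes bounded: "\<And>x. norm (M x) \<le> B"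
  shows "u \<bullet> (M x *v u) \<le> (SUP x. SUP y\<in>{y. norm y = 1}. y \<bullet> (M x *v y)) * (norm u)^2"
proof -
  define U :: "(real^'n) set" where "U = {y. norm y = 1}"
  define K where "K = real CARD('n) * real CARD('n) * B"
  have U_ne: "U \<noteq> {}"
    using vector_choose_size[of 1] by (auto simp: U_def)
  have unit_le_K: "y \<bullet> (M x *v y) \<le> K" if "y \<in> U" for x y
  proof -
    have "y \<bullet> (M x *v y) \<le> norm y * norm (M x *v y)"
      by (rule norm_cauchy_schwarz)
    also have "\<dots> \<le> real CARD('n) * real CARD('n) * norm (M x)"
      using norm_matrix_vector_mult_le[of "M x" y] that by (simp add: U_def)
    also have "\<dots> \<le> K"
      unfolding K_def using bounded[of x] by (simp add: mult_left_mono)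
    finally show ?thesis .
  qed
  have bdd_U: "bdd_above ((\<lambda>y. y \<bullet> (M x *v y)) ` U)" for x
    using unit_le_K by (intro bdd_aboveI2) blast
  have bdd_X: "bdd_above (range (\<lambda>x. SUP y\<in>U. y \<bullet> (M x *v y)))"
    using U_ne unit_le_K by (intro bdd_aboveI2 cSUP_least) auto
  have unit_le: "w \<bullet> (M x *v w) \<le> (SUP x. SUP y\<in>U. y \<bullet> (M x *v y))" if "w \<in> U" for w
    by (rule order_trans[OF cSUP_upper[OF that bdd_U] cSUP_upper[OF UNIV_I bdd_X]])
  show ?thesis
  proof (cases "u = 0")
    case False
    define w where "w = (1 / norm u) *\<^sub>R u"
    have "w \<in> U" "u = norm u *\<^sub>R w"
      using False by (simp_all add: U_def w_def)
    then have "u \<bullet> (M x *v u) = (norm u)^2 * (w \<bullet> (M x *v w))"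
      by (metis inner_scaleR_left inner_scaleR_right matrix_vector_mult_scaleR mult.assoc power2_eq_square)
    also have "\<dots> \<le> (norm u)^2 * (SUP x. SUP y\<in>U. y \<bullet> (M x *v y))"
      using unit_le[OF \<open>w \<in> U\<close>] by (simp add: mult_left_mono)
    finally show ?thesis
      by (simp add: U_def mult.commute)
  qed simp
qed

lemma elliptic_le_SUP_unit_sphere:
  fixes M :: "'a \<Rightarrow> real^'n^'n"
  assumes "\<And>x. norm (M x) \<le> B" and "\<And>x y. c * (norm y)^2 \<le> y \<bullet> (M x *v y)"
  shows "c \<le> (SUP x. SUP y\<in>{y. norm y = 1}. y \<bullet> (M x *v y))"
proof -
  obtain u :: "real^'n" where "norm u = 1"
    using vector_choose_size[of 1] by auto
  moreover have "c * (norm u)^2 \<le> (SUP x. SUP y\<in>{y. norm y = 1}. y \<bullet> (M x *v y)) * (norm u)^2"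
    by (rule order_trans[OF assms(2) quadratic_form_le_SUP_unit_sphere[OF assms(1)]])
  ultimately show ?thesis
    by simp
qed

lemma inner_matrix_vector_symmetric:
  fixes S :: "real^'n^'n"
  assumes "transpose S = S"
  shows "v \<bullet> (S *v w) = (S *v v) \<bullet> w"
  by (metis assms dot_lmul_matrix transpose_matrix_vector)

lemma quadratic_form_Cauchy_Schwarz:
  fixes S :: "real^'n^'n"
  assumes sym: "transpose S = S" and psd: "\<And>y. 0 \<le> y \<bullet> (S *v y)"
  shows "(a \<bullet> (S *v b))^2 \<le> (a \<bullet> (S *v a)) * (b \<bullet> (S *v b))"
proof -
  define P Q R where "P = a \<bullet> (S *v a)" and "Q = b \<bullet> (S *v b)" and "R = a \<bullet> (S *v b)"
  have quadratic_nonneg: "0 \<le> P + 2 * t * R + t^2 * Q" for t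
  proof -
    have "0 \<le> (a + t *\<^sub>R b) \<bullet> (S *v (a + t *\<^sub>R b))"
      by (rule psd)
    also have "\<dots> = P + 2 * t * R + t^2 * Q"
      using inner_matrix_vector_symmetric[OF sym, of b a]
      by (simp add: matrix_vector_right_distrib matrix_vector_mult_scaleR inner_add_left
          inner_add_right P_def Q_def R_def power2_eq_square algebra_simps inner_commute)
    finally show ?thesis .
  qed
  show ?thesis
  proof (cases "Q = 0")
    case True
    have "R = 0"
    proof (rule ccontr)
      assume "R \<noteq> 0"
      with True quadratic_nonneg[of "- (P + 1) / (2 * R)"] show False
        by (simp add: field_simps)
    qed
    with True show ?thesis
      by (simp add: R_def Q_def)
  next
    case False
    then have "Q > 0"
      using psd[of b] by (simp add: Q_def)
    with quadratic_nonneg[of "- R / Q"] have "R^2 \<le> P * Q"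
      by (simp add: field_simps power2_eq_square)
    then show ?thesis
      by (simp add: R_def P_def Q_def)
  qed
qed

lemma matrix_vector_mult_matrix_inv:
  fixes S :: "'a::comm_semiring_1^'n^'n"
  assumes "invertible S"
  shows "S *v (matrix_inv S *v u) = u"
proof -
  have "S ** matrix_inv S = mat 1"
    using assms unfolding invertible_def matrix_inv_def by (rule someI_ex[THEN conjunct1])
  then show ?thesis
    by (metis matrix_vector_mul_assoc matrix_vector_mul_lid)
qed

lemma quadratic_form_matrix_inv_lower:
  fixes S :: "real^'n^'n"
  assumes sym: "transpose S = S" and psd: "\<And>y. 0 \<le> y \<bullet> (S *v y)"
    and upper: "\<And>y. y \<bullet> (S *v y) \<le> L * (norm y)^2" and inv: "invertible S"
  shows "(norm u)^2 \<le> L * (u \<bullet> (matrix_inv S *v u))"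
proof -
  define v where "v = matrix_inv S *v u"
  have Sv: "S *v v = u"
    unfolding v_def by (rule matrix_vector_mult_matrix_inv[OF inv])
  have v_form: "u \<bullet> (matrix_inv S *v u) = v \<bullet> (S *v v)"
    by (simp add: Sv v_def[symmetric] inner_commute)
  have "v \<bullet> (S *v u) = (norm u)^2"
    using inner_matrix_vector_symmetric[OF sym, of v u] Sv by (simp add: power2_norm_eq_inner)
  then have "((norm u)^2)^2 \<le> (v \<bullet> (S *v v)) * (u \<bullet> (S *v u))"
    using quadratic_form_Cauchy_Schwarz[OF sym psd, of v u] by simp
  also have "\<dots> \<le> (v \<bullet> (S *v v)) * (L * (norm u)^2)"
    by (rule mult_left_mono[OF upper psd])
  finally have "(norm u)^2 * (norm u)^2 \<le> (L * (v \<bullet> (S *v v))) * (norm u)^2"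
    by (simp add: power2_eq_square ac_simps)
  from mult_right_le_imp_le[OF this] show ?thesis
    using v_form by (cases "u = 0") auto
qed

section \<open>Determinants of uniformly elliptic matrices\<close>

lemma invertible_if_elliptic:
  fixes M :: "real^'n^'n"
  assumes c: "c > 0" and ell: "\<And>y. c * (norm y)^2 \<le> y \<bullet> (M *v y)"
  shows "invertible M"
proof -
  have "y = 0" if "M *v y = 0" for y
    using ell[of y] that c by (simp add: mult_le_0_iff)
  then show ?thesis
    unfolding invertible_left_inverse matrix_left_invertible_ker by blast
qed

lemma continuous_on_det: "continuous_on S (det :: real^'n^'n \<Rightarrow> real)"
  unfolding det_def[abs_def]
  by (intro continuous_intros continuous_on_compose2[OF linear_continuous_on[OF bounded_linear_vec_nth]]) auto

lemma continuous_on_quadratic_form: "continuous_on S (\<lambda>M::real^'n^'n. y \<bullet> (M *v y))"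
  unfolding inner_vec_def matrix_vector_mult_def
  by (intro continuous_intros continuous_on_compose2[OF linear_continuous_on[OF bounded_linear_vec_nth]]) auto

lemma det_pos_if_elliptic:
  fixes M :: "real^'n^'n"
  assumes c: "c > 0" and ell: "\<And>y. c * (norm y)^2 \<le> y \<bullet> (M *v y)"
  shows "det M > 0"
proof (rule ccontr)
  assume "\<not> det M > 0"
  define P where "P t = (1 - t) *\<^sub>R mat 1 + t *\<^sub>R M" for t :: real
  have "continuous_on {0..1} (\<lambda>t. det (P t))"
    unfolding P_def by (rule continuous_on_compose2[OF continuous_on_det[of UNIV]]) (auto intro!: continuous_intros)
  moreover have "det (P 1) \<le> 0" "0 \<le> det (P 0)"
    using \<open>\<not> det M > 0\<close> by (auto simp: P_def)
  ultimately obtain t where t: "0 \<le> t" "t \<le> 1" "det (P t) = 0"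
    using IVT2'[of "\<lambda>t. det (P t)" 1 0 0] by auto
  \<comment> \<open>but the whole segment from the identity to M is elliptic, hence invertible\<close>
  have "min 1 c * (norm y)^2 \<le> y \<bullet> (P t *v y)" for y
  proof -
    have "min 1 c * (norm y)^2 = (1 - t) * (min 1 c * (norm y)^2) + t * (min 1 c * (norm y)^2)"
      by (simp add: algebra_simps)
    also have "\<dots> \<le> (1 - t) * (norm y)^2 + t * (y \<bullet> (M *v y))"
    proof -
      have "min 1 c * (norm y)^2 \<le> (norm y)^2"
        using c by (intro mult_left_le_one_le) auto
      moreover have "min 1 c * (norm y)^2 \<le> y \<bullet> (M *v y)"
        by (rule order_trans[OF mult_right_mono ell]) auto
      ultimately show ?thesis
        using t by (intro add_mono mult_left_mono) auto
    qed
    also have "\<dots> = y \<bullet> (P t *v y)"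
      by (simp add: P_def matrix_vector_mult_add_rdistrib scaleR_matrix_vector_assoc[symmetric]
          power2_norm_eq_inner inner_add_right)
    finally show ?thesis .
  qed
  then have "invertible (P t)"
    using c by (intro invertible_if_elliptic[of "min 1 c"]) auto
  with t show False
    by (simp add: invertible_det_nz)
qed

lemma det_lower_bound_if_elliptic_bounded:
  assumes c: "c > 0"
  obtains \<delta> where "\<delta> > 0"
    and "\<And>M::real^'n^'n. (\<And>y. c * (norm y)^2 \<le> y \<bullet> (M *v y)) \<Longrightarrow> norm M \<le> B \<Longrightarrow> \<delta> \<le> det M"
proof -
  define K where "K = {M::real^'n^'n. (\<forall>y. c * (norm y)^2 \<le> y \<bullet> (M *v y)) \<and> norm M \<le> B}"
  have "K = (\<Inter>y. {M. c * (norm y)^2 \<le> y \<bullet> (M *v y)}) \<inter> cball 0 B"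
    unfolding K_def by auto
  moreover have "closed {M::real^'n^'n. c * (norm y)^2 \<le> y \<bullet> (M *v y)}" for y
    by (rule closed_Collect_le) (auto intro: continuous_on_quadratic_form continuous_intros)
  ultimately have "closed K"
    by auto
  moreover have "bounded K"
    unfolding K_def by (rule bounded_subset[OF bounded_cball[of 0 B]]) auto
  ultimately have "compact K"
    by (simp add: compact_eq_bounded_closed)
  show ?thesis
  proof (cases "K = {}")
    case True
    then show ?thesis
      by (intro that[of 1]) (auto simp: K_def)
  next
    case False
    then obtain M0 where M0: "M0 \<in> K" "\<forall>M\<in>K. det M0 \<le> det M"
      using continuous_attains_inf[OF \<open>compact K\<close> _ continuous_on_det] by blast
    have "det M0 > 0"
      using M0(1) by (intro det_pos_if_elliptic[OF c]) (auto simp: K_def)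
    then show ?thesis
      using M0 by (intro that[of "det M0"]) (auto simp: K_def)
  qed
qed

section \<open>Gaussian integrals and Gaussian measures\<close>

lemma power2_norm_add_le_weighted:
  fixes p q :: "'a::real_normed_vector"
  assumes "0 < a" "a < 1"
  shows "(norm (p + q))^2 \<le> (norm p)^2 / a + (norm q)^2 / (1 - a)"
proof -
  define P Q where "P = norm p" and "Q = norm q"
  have "a * (1 - a) * (P + Q)^2 + ((1 - a) * P - a * Q)^2 = (1 - a) * P^2 + a * Q^2"
    by (simp add: power2_eq_square algebra_simps)
  then have "a * (1 - a) * (P + Q)^2 \<le> (1 - a) * P^2 + a * Q^2"
    by (metis le_add_same_cancel1 zero_le_power2)
  then have "(P + Q)^2 \<le> P^2 / a + Q^2 / (1 - a)"
    using assms by (simp add: field_simps)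
  moreover have "(norm (p + q))^2 \<le> (P + Q)^2"
    unfolding P_def Q_def by (simp add: norm_triangle_ineq power_mono)
  ultimately show ?thesis
    unfolding P_def Q_def by linarith
qed

lemma norm_power2_shift_le:
  fixes x y m :: "'a::real_normed_vector"
  assumes "0 < \<alpha>" "\<alpha> < \<beta>" and "norm (m - x) \<le> R"
  shows "\<alpha> * (norm (y - x))^2 \<le> (\<alpha> + \<beta>) / 2 * (norm (y - m))^2 + \<alpha> * (\<alpha> + \<beta>) / (\<beta> - \<alpha>) * R^2"
proof -
  define a where "a = 2 * \<alpha> / (\<alpha> + \<beta>)"
  have a: "0 < a" "a < 1"
    using assms by (auto simp: a_def field_simps)
  have "(norm ((y - m) + (m - x)))^2 \<le> (norm (y - m))^2 / a + (norm (m - x))^2 / (1 - a)"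
    by (rule power2_norm_add_le_weighted[OF a])
  also have "(norm (m - x))^2 / (1 - a) \<le> R^2 / (1 - a)"
    using assms a by (intro divide_right_mono power_mono) auto
  finally have "\<alpha> * (norm (y - x))^2 \<le> \<alpha> * ((norm (y - m))^2 / a + R^2 / (1 - a))"
    using assms by (simp add: mult_left_mono)
  also have "\<dots> = (\<alpha> + \<beta>) / 2 * (norm (y - m))^2 + \<alpha> * (\<alpha> + \<beta>) / (\<beta> - \<alpha>) * R^2"
    using assms by (simp add: a_def field_simps)
  finally show ?thesis .
qed

lemma integrable_exp_neg_power2:
  assumes "\<gamma> > 0"
  shows "integrable lborel (\<lambda>t::real. exp (- \<gamma> * t^2))"
proof -
  define \<sigma> where "\<sigma> = sqrt (1 / (2 * \<gamma>))"
  have \<sigma>: "\<sigma> > 0" "\<sigma>^2 = 1 / (2 * \<gamma>)"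
    using assms by (simp_all add: \<sigma>_def)
  have "integrable lborel (\<lambda>t. sqrt (2 * pi * \<sigma>^2) * normal_density 0 \<sigma> t)"
    using \<sigma> by (intro integrable_mult_right integrable_normal_density)
  moreover have "sqrt (2 * pi * \<sigma>^2) * normal_density 0 \<sigma> t = exp (- \<gamma> * t^2)" for t
    using assms \<sigma> by (simp add: normal_density_def field_simps)
  ultimately show ?thesis
    by simp
qed

lemma integrable_exp_neg_norm_power2:
  assumes "\<gamma> > 0"
  shows "integrable lborel (\<lambda>y::'a::euclidean_space. exp (- \<gamma> * (norm y)^2))"
proof (subst integrable_iff_bounded, intro conjI)
  show "(\<lambda>y::'a. exp (- \<gamma> * (norm y)^2)) \<in> borel_measurable lborel"
    by measurable
  have factor: "ennreal (norm (exp (- \<gamma> * (norm y)^2))) = (\<Prod>b\<in>Basis. ennreal (exp (- \<gamma> * (y \<bullet> b)^2)))"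
    for y :: 'a
  proof -
    have "(norm y)^2 = (\<Sum>b\<in>Basis. (y \<bullet> b)^2)"
      unfolding power2_norm_eq_inner by (subst euclidean_inner) (simp add: power2_eq_square)
    then have "exp (- \<gamma> * (norm y)^2) = (\<Prod>b\<in>Basis. exp (- \<gamma> * (y \<bullet> b)^2))"
      by (simp add: sum_distrib_left exp_sum)
    then show ?thesis
      by (simp add: prod_ennreal prod_nonneg)
  qed
  have "(\<integral>\<^sup>+y. ennreal (norm (exp (- \<gamma> * (norm y)^2))) \<partial>(lborel::'a measure))
      = (\<Prod>b\<in>(Basis::'a set). (\<integral>\<^sup>+t. ennreal (exp (- \<gamma> * t^2)) \<partial>lborel))"
    unfolding factor by (rule nn_integral_lborel_prod) auto
  also have "\<dots> < \<infinity>"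
    using integrable_exp_neg_power2[OF assms]
    by (simp add: less_top[symmetric] ennreal_prod_eq_top integrable_iff_bounded power_eq_top_ennreal)
  finally show "(\<integral>\<^sup>+y. ennreal (norm (exp (- \<gamma> * (norm y)^2))) \<partial>(lborel::'a measure)) < \<infinity>" .
qed

lemma
  fixes m :: "'a::euclidean_space"
  assumes "\<gamma> > 0"
  shows integrable_exp_neg_norm_power2_shift:
      "integrable lborel (\<lambda>y. exp (- \<gamma> * (norm (y - m))^2))"
    and integral_exp_neg_norm_power2_shift:
      "(\<integral>y. exp (- \<gamma> * (norm (y - m))^2) \<partial>lborel) = (\<integral>y. exp (- \<gamma> * (norm y)^2) \<partial>(lborel::'a measure))"
proof -
  let ?f = "\<lambda>y::'a. exp (- \<gamma> * (norm y)^2)"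
  have shift: "(+) (- m) \<in> measurable lborel (borel::'a measure)"
    by measurable
  have f: "?f \<in> borel_measurable borel"
    by measurable
  have "integrable (distr lborel borel ((+) (- m))) ?f"
    using integrable_exp_neg_norm_power2[OF assms] by (simp add: lborel_distr_plus)
  then show "integrable lborel (\<lambda>y. exp (- \<gamma> * (norm (y - m))^2))"
    by (subst (asm) integrable_distr_eq[OF shift f]) (simp add: add.commute)
  have "(\<integral>y. ?f y \<partial>(lborel::'a measure)) = (\<integral>y. ?f y \<partial>(distr lborel borel ((+) (- m))))"
    by (simp add: lborel_distr_plus)
  also have "\<dots> = (\<integral>y. exp (- \<gamma> * (norm (y - m))^2) \<partial>lborel)"
    by (subst integral_distr[OF shift f]) (simp add: add.commute)
  finally show "(\<integral>y. exp (- \<gamma> * (norm (y - m))^2) \<partial>lborel) = (\<integral>y. ?f y \<partial>(lborel::'a measure))" ..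
qed

lemma borel_measurable_gauss_density [measurable]: "gauss_density m S \<in> borel_measurable borel"
  unfolding gauss_density_def[abs_def]
  by (intro borel_measurable_continuous_onI continuous_intros
      continuous_on_compose2[OF linear_continuous_on[OF matrix_vector_mul_bounded_linear]]) auto

lemma gauss_density_nonneg: "0 \<le> det S \<Longrightarrow> 0 \<le> gauss_density m S y"
  unfolding gauss_density_def by simp

lemma gauss_density_le:
  fixes S :: "real^'n^'n"
  assumes sym: "transpose S = S" and c: "c > 0" and ell: "\<And>y. c * (norm y)^2 \<le> y \<bullet> (S *v y)"
    and upper: "\<And>y. y \<bullet> (S *v y) \<le> L * (norm y)^2" and L: "L > 0"
    and \<delta>: "\<delta> > 0" "\<delta> \<le> det S"
  shows "gauss_density m S y
           \<le> (2 * pi) powr (- real CARD('n) / 2) / sqrt \<delta> * exp (- ((norm (y - m))^2) / (2 * L))"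
proof -
  have psd: "0 \<le> y \<bullet> (S *v y)" for y
    using c by (intro order_trans[OF _ ell]) simp
  have "(norm (y - m))^2 \<le> L * ((y - m) \<bullet> (matrix_inv S *v (y - m)))"
    using quadratic_form_matrix_inv_lower[OF sym psd upper invertible_if_elliptic[OF c ell]] .
  then have exp_le: "exp (- (1/2) * ((y - m) \<bullet> (matrix_inv S *v (y - m))))
      \<le> exp (- ((norm (y - m))^2) / (2 * L))"
    using L by (simp add: field_simps)
  have det_le: "1 / sqrt (det S) \<le> 1 / sqrt \<delta>"
    using \<delta> by (intro divide_left_mono) auto
  have "gauss_density m S y = (2 * pi) powr (- real CARD('n) / 2) * (1 / sqrt (det S))
        * exp (- (1/2) * ((y - m) \<bullet> (matrix_inv S *v (y - m))))"
    unfolding gauss_density_def by simp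
  also have "\<dots> \<le> (2 * pi) powr (- real CARD('n) / 2) * (1 / sqrt \<delta>) * exp (- ((norm (y - m))^2) / (2 * L))"
    using \<delta> by (intro mult_mono mult_left_mono exp_le det_le) auto
  finally show ?thesis
    by simp
qed

lemma
  fixes h w :: "'a::euclidean_space \<Rightarrow> real"
  assumes h: "h \<in> borel_measurable borel" "\<And>y. 0 \<le> h y"
    and w: "w \<in> borel_measurable borel" "\<And>y. 0 \<le> w y"
    and dominated: "\<And>y. h y * w y \<le> K * exp (- \<gamma> * (norm (y - m))^2)" and \<gamma>: "\<gamma> > 0"
  shows integrable_density_dominated_by_gaussian: "integrable (density lborel (\<lambda>y. ennreal (h y))) w"
    and integral_density_dominated_by_gaussian:
      "(\<integral>y. w y \<partial>density lborel (\<lambda>y. ennreal (h y))) \<le> K * (\<integral>y. exp (- \<gamma> * (norm y)^2) \<partial>(lborel::'a measure))"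
proof -
  have bound: "integrable lborel (\<lambda>y. K * exp (- \<gamma> * (norm (y - m))^2))"
    by (intro integrable_mult_right integrable_exp_neg_norm_power2_shift[OF \<gamma>])
  have nonneg: "0 \<le> h y * w y" for y
    using h w by simp
  have "norm (h y * w y) \<le> norm (K * exp (- \<gamma> * (norm (y - m))^2))" for y
    unfolding real_norm_def abs_of_nonneg[OF nonneg] by (rule order_trans[OF dominated abs_ge_self])
  then have "integrable lborel (\<lambda>y. h y * w y)"
    using h w by (intro Bochner_Integration.integrable_bound[OF bound] AE_I2) auto
  then show "integrable (density lborel (\<lambda>y. ennreal (h y))) w"
    using h w by (subst integrable_density) auto
  have "(\<integral>y. w y \<partial>density lborel (\<lambda>y. ennreal (h y))) = (\<integral>y. h y * w y \<partial>lborel)"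
    using h w by (subst integral_density) auto
  also have "\<dots> \<le> (\<integral>y. K * exp (- \<gamma> * (norm (y - m))^2) \<partial>lborel)"
    using dominated nonneg by (intro integral_mono_AE' bound AE_I2) (auto intro: order_trans)
  also have "\<dots> = K * (\<integral>y. exp (- \<gamma> * (norm y)^2) \<partial>(lborel::'a measure))"
    using integral_exp_neg_norm_power2_shift[OF \<gamma>, of m] by simp
  finally show "(\<integral>y. w y \<partial>density lborel (\<lambda>y. ennreal (h y)))
      \<le> K * (\<integral>y. exp (- \<gamma> * (norm y)^2) \<partial>(lborel::'a measure))" .
qed

lemma gauss_measure_exp_moment_bounded:
  fixes c L B R \<alpha> :: real
  assumes c: "c > 0" and L: "L > 0" and \<alpha>: "0 < \<alpha>" "2 * L * \<alpha> < 1"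
  obtains M where
    "\<And>(m::real^'n) S x. transpose S = S \<Longrightarrow> (\<And>y. c * (norm y)^2 \<le> y \<bullet> (S *v y)) \<Longrightarrow>
       (\<And>y. y \<bullet> (S *v y) \<le> L * (norm y)^2) \<Longrightarrow> norm S \<le> B \<Longrightarrow> norm (m - x) \<le> R \<Longrightarrow>
       integrable (gauss_measure m S) (\<lambda>y. exp (\<alpha> * (norm (y - x))^2)) \<and>
       (\<integral>y. exp (\<alpha> * (norm (y - x))^2) \<partial>gauss_measure m S) \<le> M"
proof -
  obtain \<delta> where \<delta>: "\<delta> > 0"
    and \<delta>_le: "\<And>M::real^'n^'n. (\<And>y. c * (norm y)^2 \<le> y \<bullet> (M *v y)) \<Longrightarrow> norm M \<le> B \<Longrightarrow> \<delta> \<le> det M"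
    using det_lower_bound_if_elliptic_bounded[OF c] by metis
  define \<beta> where "\<beta> = 1 / (2 * L)"
  \<comment> \<open>half of the gap \<open>\<beta> - \<alpha>\<close> pays for the shift of the mean, half is left for integrability\<close>
  define \<gamma> where "\<gamma> = (\<beta> - \<alpha>) / 2"
  define A where "A = (2 * pi) powr (- real CARD('n) / 2) / sqrt \<delta>"
  define E where "E = \<alpha> * (\<alpha> + \<beta>) / (\<beta> - \<alpha>) * R^2"
  have \<alpha>\<beta>: "\<alpha> < \<beta>"
    using L \<alpha> by (simp add: \<beta>_def field_simps)
  then have \<gamma>: "\<gamma> > 0"
    by (simp add: \<gamma>_def)
  show ?thesis
  proof (rule that)
    fix m x :: "real^'n" and S :: "real^'n^'n"
    assume sym: "transpose S = S" and ell: "\<And>y. c * (norm y)^2 \<le> y \<bullet> (S *v y)"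
      and upper: "\<And>y. y \<bullet> (S *v y) \<le> L * (norm y)^2" and "norm S \<le> B" and mx: "norm (m - x) \<le> R"
    have det: "\<delta> \<le> det S"
      using ell \<open>norm S \<le> B\<close> by (rule \<delta>_le)
    have dens_nonneg: "0 \<le> gauss_density m S y" for y
      using \<delta> det by (intro gauss_density_nonneg) linarith
    have "gauss_density m S y * exp (\<alpha> * (norm (y - x))^2) \<le> A * exp E * exp (- \<gamma> * (norm (y - m))^2)" for y
    proof -
      have "gauss_density m S y \<le> A * exp (- \<beta> * (norm (y - m))^2)"
        using gauss_density_le[OF sym c ell upper L \<delta> det, of m y] by (simp add: A_def \<beta>_def)
      moreover have "exp (\<alpha> * (norm (y - x))^2) \<le> exp ((\<alpha> + \<beta>) / 2 * (norm (y - m))^2 + E)"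
        using norm_power2_shift_le[OF \<alpha>(1) \<alpha>\<beta> mx, of y] by (simp add: E_def)
      ultimately have "gauss_density m S y * exp (\<alpha> * (norm (y - x))^2)
          \<le> A * exp (- \<beta> * (norm (y - m))^2) * exp ((\<alpha> + \<beta>) / 2 * (norm (y - m))^2 + E)"
        using dens_nonneg[of y] by (intro mult_mono) auto
      also have "\<dots> = A * exp E * exp (- \<gamma> * (norm (y - m))^2)"
        by (simp add: \<gamma>_def mult_exp_exp algebra_simps add_divide_distrib diff_divide_distrib)
      finally show ?thesis .
    qed
    then show "integrable (gauss_measure m S) (\<lambda>y. exp (\<alpha> * (norm (y - x))^2)) \<and>
        (\<integral>y. exp (\<alpha> * (norm (y - x))^2) \<partial>gauss_measure m S)
          \<le> A * exp E * (\<integral>y. exp (- \<gamma> * (norm y)^2) \<partial>(lborel::(real^'n) measure))"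
      unfolding gauss_measure_def using dens_nonneg \<gamma>
      by (intro conjI integrable_density_dominated_by_gaussian integral_density_dominated_by_gaussian) auto
  qed
qed

lemma q_kernel_exp_moment_bounded:
  fixes b :: "real^'n \<Rightarrow> real^'n" and C :: "real^'n \<Rightarrow> real^'n^'n"
  assumes \<theta>: "\<theta> > 0" and c: "c > 0" and \<Lambda>: "\<Lambda> > 0"
    and b_bounded: "\<And>x. norm (b x) \<le> B" and C_bounded: "\<And>x. norm (C x) \<le> B"
    and C_sym: "\<And>x. transpose (C x) = C x"
    and C_elliptic: "\<And>x y. c * (norm y)^2 \<le> y \<bullet> (C x *v y)"
    and C_upper: "\<And>x y. y \<bullet> (C x *v y) \<le> \<Lambda> * (norm y)^2"
    and \<alpha>: "0 < \<alpha>" "2 * \<Lambda> * \<alpha> < \<theta>"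
  obtains M where "\<And>x. integrable (q_kernel b C \<theta> x) (\<lambda>y. exp (\<alpha> * (norm (y - x))^2))"
    and "\<And>x. (\<integral>y. exp (\<alpha> * (norm (y - x))^2) \<partial>q_kernel b C \<theta> x) \<le> M"
proof -
  have "0 < c / \<theta>" "0 < \<Lambda> / \<theta>" "2 * (\<Lambda> / \<theta>) * \<alpha> < 1"
    using c \<Lambda> \<alpha> \<theta> by (simp_all add: field_simps)
  then obtain M where M: "\<And>(m::real^'n) S x. transpose S = S \<Longrightarrow> (\<And>y. c / \<theta> * (norm y)^2 \<le> y \<bullet> (S *v y)) \<Longrightarrow>
       (\<And>y. y \<bullet> (S *v y) \<le> \<Lambda> / \<theta> * (norm y)^2) \<Longrightarrow> norm S \<le> B / \<theta> \<Longrightarrow> norm (m - x) \<le> B / \<theta> \<Longrightarrow>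
       integrable (gauss_measure m S) (\<lambda>y. exp (\<alpha> * (norm (y - x))^2)) \<and>
       (\<integral>y. exp (\<alpha> * (norm (y - x))^2) \<partial>gauss_measure m S) \<le> M"
    using gauss_measure_exp_moment_bounded[where B = "B / \<theta>" and R = "B / \<theta>"] \<alpha>(1) by blast
  have quad_scaled: "y \<bullet> (((1/\<theta>) *\<^sub>R C x) *v y) = (y \<bullet> (C x *v y)) / \<theta>" for x y
    by (simp add: scaleR_matrix_vector_assoc[symmetric])
  have "integrable (q_kernel b C \<theta> x) (\<lambda>y. exp (\<alpha> * (norm (y - x))^2)) \<and>
      (\<integral>y. exp (\<alpha> * (norm (y - x))^2) \<partial>q_kernel b C \<theta> x) \<le> M" for x
    unfolding q_kernel_def
  proof (rule M)
    show "transpose ((1/\<theta>) *\<^sub>R C x) = (1/\<theta>) *\<^sub>R C x"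
      using C_sym by (simp add: transpose_scalar)
    show "c / \<theta> * (norm y)^2 \<le> y \<bullet> (((1/\<theta>) *\<^sub>R C x) *v y)"
      "y \<bullet> (((1/\<theta>) *\<^sub>R C x) *v y) \<le> \<Lambda> / \<theta> * (norm y)^2" for y
      using \<theta> by (simp_all add: quad_scaled divide_right_mono C_elliptic C_upper)
    show "norm ((1/\<theta>) *\<^sub>R C x) \<le> B / \<theta>" "norm (x + (1/\<theta>) *\<^sub>R b x - x) \<le> B / \<theta>"
      using b_bounded[of x] C_bounded[of x] \<theta> by (simp_all add: divide_right_mono)
  qed
  then show ?thesis
    using that by blast
qed

section \<open>Increments of Gaussian convolutions\<close>

lemma p_gauss_nonneg: "0 \<le> p_gauss s z"
  by (simp add: p_gauss_def)

lemma conv_meas_p_gauss_nonneg: "0 \<le> conv_meas (p_gauss s) \<eta> x"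
  unfolding conv_meas_def by (intro integral_nonneg_AE) (simp add: p_gauss_nonneg)

lemma integrable_p_gauss_shift:
  fixes x :: "real^'n"
  assumes "finite_measure \<eta>" and sets: "sets \<eta> = sets borel" and s: "s > 0"
  shows "integrable \<eta> (\<lambda>z. p_gauss s (x - z))"
proof (rule finite_measure.integrable_const_bound[OF assms(1)])
  have "(\<lambda>z. p_gauss s (x - z)) \<in> borel_measurable borel"
    unfolding p_gauss_def by measurable
  then show "(\<lambda>z. p_gauss s (x - z)) \<in> borel_measurable \<eta>"
    using measurable_cong_sets[OF sets refl] by blast
  have "p_gauss s (x - z) \<le> (2 * pi * s) powr (- real CARD('n) / 2)" for z
    unfolding p_gauss_def using s by (intro mult_left_le) auto
  then show "AE z in \<eta>. norm (p_gauss s (x - z)) \<le> (2 * pi * s) powr (- real CARD('n) / 2)"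
    by (simp add: p_gauss_nonneg)
qed

lemma p_gauss_le_p_gauss_wider:
  fixes x y z :: "real^'n"
  assumes s: "0 < s" and st: "s < t"
  shows "p_gauss s (y - z) \<le> (t / s) powr (real CARD('n) / 2) * exp ((norm (y - x))^2 / (2 * (t - s))) * p_gauss t (x - z)"
proof -
  define u v where "u = x - z" and "v = y - x"
  define cs ct where "cs = (2 * pi * s) powr (- real CARD('n) / 2)" and "ct = (2 * pi * t) powr (- real CARD('n) / 2)"
  have ct: "ct > 0"
    using s st by (simp add: ct_def)
  have "cs / ct = (2 * pi * t) powr (real CARD('n) / 2) / (2 * pi * s) powr (real CARD('n) / 2)"
    by (simp add: cs_def ct_def powr_minus_divide)
  also have "\<dots> = (t / s) powr (real CARD('n) / 2)"
    using s st by (simp add: powr_divide[symmetric])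
  finally have ratio: "cs / ct = (t / s) powr (real CARD('n) / 2)" .
  have "(norm ((u + v) + (- v)))^2 \<le> (norm (u + v))^2 / (s / t) + (norm (- v))^2 / (1 - s / t)"
    using s st by (intro power2_norm_add_le_weighted) auto
  then have "(norm u)^2 \<le> t * (norm (u + v))^2 / s + t * (norm v)^2 / (t - s)"
    using s st by (simp add: field_simps)
  then have exponent_le: "- ((norm (u + v))^2) / (2 * s) \<le> (norm v)^2 / (2 * (t - s)) - (norm u)^2 / (2 * t)"
    using s st by (simp add: field_simps)
  have "p_gauss s (y - z) = cs * exp (- ((norm (u + v))^2) / (2 * s))"
    unfolding p_gauss_def cs_def u_def v_def by simp
  also have "\<dots> \<le> cs * exp ((norm v)^2 / (2 * (t - s)) - (norm u)^2 / (2 * t))"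
    by (intro mult_left_mono) (use exponent_le in \<open>auto simp: cs_def\<close>)
  also have "\<dots> = cs / ct * exp ((norm v)^2 / (2 * (t - s))) * (ct * exp (- ((norm u)^2) / (2 * t)))"
    using ct by (simp add: exp_diff exp_minus field_simps)
  also have "\<dots> = (t / s) powr (real CARD('n) / 2) * exp ((norm (y - x))^2 / (2 * (t - s))) * p_gauss t (x - z)"
    unfolding ratio unfolding p_gauss_def ct_def u_def v_def by simp
  finally show ?thesis .
qed

lemma conv_meas_p_gauss_le_wider:
  fixes x y :: "real^'n"
  assumes "finite_measure \<eta>" "sets \<eta> = sets borel" and s: "0 < s" and st: "s < t"
  shows "conv_meas (p_gauss s) \<eta> y
           \<le> (t / s) powr (real CARD('n) / 2) * conv_meas (p_gauss t) \<eta> x * exp ((norm (y - x))^2 / (2 * (t - s)))"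
proof -
  define D where "D = (t / s) powr (real CARD('n) / 2) * exp ((norm (y - x))^2 / (2 * (t - s)))"
  have "conv_meas (p_gauss s) \<eta> y \<le> (\<integral>z. D * p_gauss t (x - z) \<partial>\<eta>)"
    unfolding conv_meas_def
  proof (rule integral_mono_AE')
    show "integrable \<eta> (\<lambda>z. D * p_gauss t (x - z))"
      using assms by (intro integrable_mult_right integrable_p_gauss_shift) auto
    show "AE z in \<eta>. p_gauss s (y - z) \<le> D * p_gauss t (x - z)"
      unfolding D_def using p_gauss_le_p_gauss_wider[OF s st, of y _ x] by (intro AE_I2) (simp only: mult.assoc)
    show "AE z in \<eta>. 0 \<le> D * p_gauss t (x - z)"
      by (simp add: D_def p_gauss_nonneg)
  qed
  then show ?thesis
    unfolding conv_meas_def D_def by (simp add: ac_simps)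
qed

lemma increment_moments_le:
  fixes f :: "'a::real_normed_vector \<Rightarrow> real"
  assumes f_nonneg: "\<And>y. 0 \<le> f y" and f_le: "\<And>y. f y \<le> G * exp (a * (norm (y - x))^2)"
    and a: "0 \<le> a" and integrable: "integrable Q (\<lambda>y. exp (2 * a * (norm (y - x))^2))"
    and moment: "(\<integral>y. exp (2 * a * (norm (y - x))^2) \<partial>Q) \<le> M"
  shows "\<bar>\<integral>y. f y - f x \<partial>Q\<bar> \<le> 2 * G * M"
    and "(\<integral>y. (f y - f x)^2 \<partial>Q) \<le> 4 * G^2 * M"
proof -
  define e where "e y = exp (a * (norm (y - x))^2)" for y
  have G: "0 \<le> G"
    using f_nonneg[of x] f_le[of x] by simp
  have e: "1 \<le> e y" "e y \<le> (e y)^2" "(e y)^2 = exp (2 * a * (norm (y - x))^2)" for y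
    using a by (auto simp: e_def power2_eq_square mult_exp_exp)
  have increment: "\<bar>f y - f x\<bar> \<le> 2 * G * e y" for y
  proof -
    have "f x \<le> G * e y"
      using f_le[of x] mult_left_mono[OF e(1)[of y] G] by (simp add: e_def)
    then show ?thesis
      using f_nonneg[of x] f_nonneg[of y] f_le[of y] by (simp add: e_def)
  qed
  have "\<bar>\<integral>y. f y - f x \<partial>Q\<bar> \<le> (\<integral>y. 2 * G * exp (2 * a * (norm (y - x))^2) \<partial>Q)"
  proof (rule order_trans[OF integral_norm_bound[of Q "\<lambda>y. f y - f x", unfolded real_norm_def]])
    have "\<bar>f y - f x\<bar> \<le> 2 * G * exp (2 * a * (norm (y - x))^2)" for y
      using increment[of y] mult_left_mono[OF e(2), of "2 * G" y] G e(3)[of y] by simp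
    then show "(\<integral>y. \<bar>f y - f x\<bar> \<partial>Q) \<le> (\<integral>y. 2 * G * exp (2 * a * (norm (y - x))^2) \<partial>Q)"
      using G by (intro integral_mono_AE' integrable_mult_right integrable AE_I2) auto
  qed
  also have "\<dots> \<le> 2 * G * M"
    using G moment by (simp add: mult_left_mono)
  finally show "\<bar>\<integral>y. f y - f x \<partial>Q\<bar> \<le> 2 * G * M" .
  have "(f y - f x)^2 \<le> 4 * G^2 * exp (2 * a * (norm (y - x))^2)" for y
  proof -
    have "(f y - f x)^2 \<le> (2 * G * e y)^2"
      using increment[of y] by (simp add: power2_le_iff_abs_le G e_def)
    then show ?thesis
      using e(3)[of y] by (simp add: power_mult_distrib)
  qed
  then have "(\<integral>y. (f y - f x)^2 \<partial>Q) \<le> (\<integral>y. 4 * G^2 * exp (2 * a * (norm (y - x))^2) \<partial>Q)"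
    by (intro integral_mono_AE' integrable_mult_right integrable AE_I2) auto
  also have "\<dots> \<le> 4 * G^2 * M"
    using moment by (simp add: mult_left_mono)
  finally show "(\<integral>y. (f y - f x)^2 \<partial>Q) \<le> 4 * G^2 * M" .
qed

lemma conv_meas_p_gauss_increment_moments_le:
  fixes x :: "real^'n"
  assumes \<eta>: "finite_measure \<eta>" "sets \<eta> = sets borel" and s: "0 < s" and st: "s < t"
    and integrable: "integrable Q (\<lambda>y. exp (1 / (t - s) * (norm (y - x))^2))"
    and moment: "(\<integral>y. exp (1 / (t - s) * (norm (y - x))^2) \<partial>Q) \<le> M"
  shows "\<bar>\<integral>y. conv_meas (p_gauss s) \<eta> y - conv_meas (p_gauss s) \<eta> x \<partial>Q\<bar>
           \<le> 2 * (t / s) powr (real CARD('n) / 2) * M * conv_meas (p_gauss t) \<eta> x"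
    and "(\<integral>y. (conv_meas (p_gauss s) \<eta> y - conv_meas (p_gauss s) \<eta> x)^2 \<partial>Q)
           \<le> 4 * ((t / s) powr (real CARD('n) / 2))^2 * M * (conv_meas (p_gauss t) \<eta> x)^2"
proof -
  define a where "a = 1 / (2 * (t - s))"
  have exponent: "2 * a * r = 1 / (t - s) * r" "r / (2 * (t - s)) = a * r" for r
    using st by (simp_all add: a_def field_simps)
  note increments = increment_moments_le[OF conv_meas_p_gauss_nonneg
      conv_meas_p_gauss_le_wider[OF \<eta> s st, of _ x, unfolded exponent(2)] _
      integrable[folded exponent(1)] moment[folded exponent(1)]]
  show "\<bar>\<integral>y. conv_meas (p_gauss s) \<eta> y - conv_meas (p_gauss s) \<eta> x \<partial>Q\<bar>
      \<le> 2 * (t / s) powr (real CARD('n) / 2) * M * conv_meas (p_gauss t) \<eta> x"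
    using increments(1) st by (simp add: a_def ac_simps)
  show "(\<integral>y. (conv_meas (p_gauss s) \<eta> y - conv_meas (p_gauss s) \<eta> x)^2 \<partial>Q)
      \<le> 4 * ((t / s) powr (real CARD('n) / 2))^2 * M * (conv_meas (p_gauss t) \<eta> x)^2"
    using increments(2) st by (simp add: a_def power_mult_distrib ac_simps)
qed

lemma kernel_conv_meas_p_gauss_increments_bounded:
  fixes Q :: "real^'n \<Rightarrow> (real^'n) measure"
  assumes \<theta>: "0 \<le> \<theta>" and s: "0 < s" and st: "s < t"
    and integrable: "\<And>x. integrable (Q x) (\<lambda>y. exp (1 / (t - s) * (norm (y - x))^2))"
    and moment: "\<And>x. (\<integral>y. exp (1 / (t - s) * (norm (y - x))^2) \<partial>Q x) \<le> M"
  shows "\<exists>K. \<forall>x (\<eta>::(real^'n) measure). finite_measure \<eta> \<and> sets \<eta> = sets borel \<longrightarrow>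
           \<bar>\<theta> * (\<integral>y. conv_meas (p_gauss s) \<eta> y - conv_meas (p_gauss s) \<eta> x \<partial>Q x)\<bar>
              \<le> K * conv_meas (p_gauss t) \<eta> x
         \<and> \<theta> * (\<integral>y. (conv_meas (p_gauss s) \<eta> y - conv_meas (p_gauss s) \<eta> x)^2 \<partial>Q x)
              \<le> K * (conv_meas (p_gauss t) \<eta> x)^2"
proof -
  define D where "D = (t / s) powr (real CARD('n) / 2)"
  let ?K = "max (2 * \<theta> * D * M) (4 * \<theta> * D^2 * M)"
  show ?thesis
  proof (intro exI[of _ ?K] allI impI)
    fix x and \<eta> :: "(real^'n) measure"
    assume "finite_measure \<eta> \<and> sets \<eta> = sets borel"
    then have \<eta>: "finite_measure \<eta>" "sets \<eta> = sets borel"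
      by auto
    let ?f = "conv_meas (p_gauss s) \<eta>" and ?g = "conv_meas (p_gauss t) \<eta> x"
    note increments = conv_meas_p_gauss_increment_moments_le[OF \<eta> s st integrable moment, folded D_def]
    have "\<bar>\<theta> * (\<integral>y. ?f y - ?f x \<partial>Q x)\<bar> \<le> (2 * \<theta> * D * M) * ?g"
      using mult_left_mono[OF increments(1) \<theta>] \<theta> by (simp add: abs_mult ac_simps)
    moreover have "\<theta> * (\<integral>y. (?f y - ?f x)^2 \<partial>Q x) \<le> (4 * \<theta> * D^2 * M) * ?g^2"
      using mult_left_mono[OF increments(2) \<theta>] by (simp add: ac_simps)
    moreover have "(2 * \<theta> * D * M) * ?g \<le> ?K * ?g" "(4 * \<theta> * D^2 * M) * ?g^2 \<le> ?K * ?g^2"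
      by (intro mult_right_mono conv_meas_p_gauss_nonneg zero_le_power2 max.cobounded1 max.cobounded2)+
    ultimately show "\<bar>\<theta> * (\<integral>y. ?f y - ?f x \<partial>Q x)\<bar> \<le> ?K * ?g
        \<and> \<theta> * (\<integral>y. (?f y - ?f x)^2 \<partial>Q x) \<le> ?K * ?g^2"
      by linarith
  qed
qed

theorem mainTheorem14:
  fixes b :: "real^'n \<Rightarrow> real^'n"
    and C :: "real^'n \<Rightarrow> real^'n^'n"
    and F :: "real^'n \<Rightarrow> real \<Rightarrow> real"
    and \<theta> eps_r eps_g :: real
  assumes b_holder: "holder_continuous b"
    and C_holder: "holder_continuous C"
    and bounded: "\<exists>B. \<forall>x. norm (b x) \<le> B \<and> norm (C x) \<le> B"
    and C_sym: "\<forall>x. transpose (C x) = C x"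
    and C_elliptic: "\<exists>c>0. \<forall>x y. c * (norm y)^2 \<le> y \<bullet> (C x *v y)"
    and F_cond: "F_condition F"
    and theta_pos: "\<theta> > 0"
    and eps_r_pos: "eps_r > 0" and eps_g_pos: "eps_g > 0"
    and ineq: "eps_r^2 + 2 * (SUP x. SUP y\<in>{y. norm y = 1}. y \<bullet> (C x *v y)) / \<theta> < eps_g^2"
  shows "\<exists>K::real. \<forall>x (\<eta>::(real^'n) measure).
           finite_measure \<eta> \<and> sets \<eta> = sets borel \<longrightarrow>
           \<bar>\<theta> * (\<integral>y. conv_meas (p_gauss (eps_r^2)) \<eta> y - conv_meas (p_gauss (eps_r^2)) \<eta> x
                     \<partial>(q_kernel b C \<theta> x))\<bar>
              \<le> K * conv_meas (p_gauss (eps_g^2)) \<eta> x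
         \<and> \<theta> * (\<integral>y. (conv_meas (p_gauss (eps_r^2)) \<eta> y - conv_meas (p_gauss (eps_r^2)) \<eta> x)^2
                     \<partial>(q_kernel b C \<theta> x))
              \<le> K * (conv_meas (p_gauss (eps_g^2)) \<eta> x)^2"
proof -
  obtain B where b_bounded: "\<And>x. norm (b x) \<le> B" and C_bounded: "\<And>x. norm (C x) \<le> B"
    using bounded by blast
  obtain c where c: "c > 0" and c_elliptic: "\<And>x y. c * (norm y)^2 \<le> y \<bullet> (C x *v y)"
    using C_elliptic by blast
  define \<Lambda> where "\<Lambda> = (SUP x. SUP y\<in>{y. norm y = 1}. y \<bullet> (C x *v y))"
  have C_upper: "y \<bullet> (C x *v y) \<le> \<Lambda> * (norm y)^2" for x y
    unfolding \<Lambda>_def using C_bounded by (rule quadratic_form_le_SUP_unit_sphere)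
  have "c \<le> \<Lambda>"
    unfolding \<Lambda>_def using C_bounded c_elliptic by (rule elliptic_le_SUP_unit_sphere)
  with c theta_pos have \<Lambda>: "0 < \<Lambda>" and "0 < 2 * \<Lambda> / \<theta>"
    by auto
  moreover have gap: "2 * \<Lambda> / \<theta> < eps_g^2 - eps_r^2"
    using ineq unfolding \<Lambda>_def by simp
  ultimately have st: "eps_r^2 < eps_g^2"
    by linarith
  have "0 < 1 / (eps_g^2 - eps_r^2)" "2 * \<Lambda> * (1 / (eps_g^2 - eps_r^2)) < \<theta>"
    using gap st theta_pos by (simp_all add: field_simps)
  then obtain M
    where "\<And>x. integrable (q_kernel b C \<theta> x) (\<lambda>y. exp (1 / (eps_g^2 - eps_r^2) * (norm (y - x))^2))"
      and "\<And>x. (\<integral>y. exp (1 / (eps_g^2 - eps_r^2) * (norm (y - x))^2) \<partial>q_kernel b C \<theta> x) \<le> M"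
    using q_kernel_exp_moment_bounded[where b = b and C = C,
        OF theta_pos c \<Lambda> b_bounded C_bounded C_sym[rule_format] c_elliptic C_upper]
    by metis
  moreover have "0 < eps_r^2"
    using eps_r_pos by simp
  ultimately show ?thesis
    using theta_pos st by (intro kernel_conv_meas_p_gauss_increments_bounded) auto
qed

end
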